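(* Let $R$ be an (irreducible) ADE lattice of rank $n\ge 9$. Then $U\oplus R$ contains a sublattice isometric to $U\oplus E_8$.
   Context: Lattices are even, integral, non-degenerate. $U$ denotes the even unimodular hyperbolic lattice of rank 2 (Gram matrix $\begin{pmatrix}0&1\\1&0\end{pmatrix}$). ADE lattices $A_n$ ($n\ge1$), $D_n$ ($n\ge4$), $E_6,E_7,E_8$ are the negative definite root lattices whose Gram matrix, in the standard basis of roots $r_1,\dots,r_n$, is $-1$ times the Cartan matrix of the corresponding Dynkin diagram (so $r_i^2=-2$, $r_i.r_j=1$ if $i\ne j$ are adjacent, $0$ otherwise). *)

theory Defs
  imports Main
begin

text \<open>Lattices are modelled as Z^m (vectors nat => int, only indices < m matter)
together with an integral symmetric Gram matrix nat => nat => int.\<close>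

datatype ade_type = A nat | D nat | E nat

definition ade_valid :: "ade_type \<Rightarrow> bool" where
  "ade_valid t = (case t of A n \<Rightarrow> n \<ge> 1 | D n \<Rightarrow> n \<ge> 4 | E n \<Rightarrow> n \<in> {6,7,8})"

fun ade_rank :: "ade_type \<Rightarrow> nat" where
  "ade_rank (A n) = n"
| "ade_rank (D n) = n"
| "ade_rank (E n) = n"

fun dynkin_adj :: "ade_type \<Rightarrow> nat \<Rightarrow> nat \<Rightarrow> bool" where
  "dynkin_adj (A n) i j = (i < n \<and> j < n \<and> (i = j + 1 \<or> j = i + 1))"
| "dynkin_adj (D n) i j =
     ((i \<le> n - 2 \<and> j \<le> n - 2 \<and> (i = j + 1 \<or> j = i + 1))
      \<or> (i = n - 1 \<and> j = n - 3) \<or> (i = n - 3 \<and> j = n - 1))"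
| "dynkin_adj (E n) i j =
     ((i \<le> n - 2 \<and> j \<le> n - 2 \<and> (i = j + 1 \<or> j = i + 1))
      \<or> (i = n - 1 \<and> j = 2) \<or> (i = 2 \<and> j = n - 1))"

text \<open>Gram matrix of the negative definite root lattice: -1 times the Cartan matrix.\<close>
definition ade_gram :: "ade_type \<Rightarrow> nat \<Rightarrow> nat \<Rightarrow> int" where
  "ade_gram t i j = (if i = j then -2 else if dynkin_adj t i j then 1 else 0)"

definition U_plus :: "(nat \<Rightarrow> nat \<Rightarrow> int) \<Rightarrow> nat \<Rightarrow> nat \<Rightarrow> int" where
  "U_plus H i j =
     (if i < 2 \<and> j < 2 then (if i \<noteq> j then 1 else 0)
      else if 2 \<le> i \<and> 2 \<le> j then H (i - 2) (j - 2) else 0)"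

definition bil :: "nat \<Rightarrow> (nat \<Rightarrow> nat \<Rightarrow> int) \<Rightarrow> (nat \<Rightarrow> int) \<Rightarrow> (nat \<Rightarrow> int) \<Rightarrow> int" where
  "bil m G x y = (\<Sum>i<m. \<Sum>j<m. x i * G i j * y j)"

text \<open>The lattice (Z^m, G) contains a sublattice isometric to (Z^k, H):
 there are Z-linearly independent vectors e_0..e_(k-1) in Z^m whose Gram matrix is H
 (their Z-span is then the required sublattice).\<close>
definition has_sublattice_iso ::
  "nat \<Rightarrow> (nat \<Rightarrow> nat \<Rightarrow> int) \<Rightarrow> nat \<Rightarrow> (nat \<Rightarrow> nat \<Rightarrow> int) \<Rightarrow> bool" where
  "has_sublattice_iso m G k H =
    (\<exists>e :: nat \<Rightarrow> nat \<Rightarrow> int.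
       (\<forall>a<k. \<forall>i. i \<ge> m \<longrightarrow> e a i = 0) \<and>
       (\<forall>a<k. \<forall>b<k. bil m G (e a) (e b) = H a b) \<and>
       (\<forall>c :: nat \<Rightarrow> int. (\<forall>i<m. (\<Sum>a<k. c a * e a i) = 0) \<longrightarrow> (\<forall>a<k. c a = 0)))"

end

theory Submission
  imports Defs
begin

text \<open>For R = A_n or D_n with n \<ge> 9 (E_n has rank at most 8), the Dynkin diagram of R_9
  is a full subgraph of that of R, so U \<oplus> R_9 is spanned by part of the standard basis of
  U \<oplus> R. It remains to find U \<oplus> E_8 in U \<oplus> A_9 and in U \<oplus> D_9: ten explicit vectors
  have the Gram matrix of U \<oplus> E_8, and since that matrix is unimodular they are linearly
  independent.\<close>

lemma bil_sum_left:
  "bil m G (\<lambda>i. \<Sum>a<k. c a * e a i) y = (\<Sum>a<k. c a * bil m G (e a) y)"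
  unfolding bil_def
  by (simp add: sum_distrib_left sum_distrib_right mult.assoc sum.swap[of _ "{..<k}"])

lemma linear_independent_if_gram_invertible:
  fixes e :: "nat \<Rightarrow> nat \<Rightarrow> int"
  assumes gram: "\<forall>a<k. \<forall>b<k. bil m G (e a) (e b) = H a b"
    and inverse: "\<forall>a<k. \<forall>d<k. (\<Sum>b<k. H a b * N b d) = (if a = d then 1 else 0)"
    and comb: "\<forall>i<m. (\<Sum>a<k. c a * e a i) = 0"
  shows "\<forall>d<k. c d = 0"
proof (intro allI impI)
  fix d assume "d < k"
  have orth: "(\<Sum>a<k. c a * H a b) = 0" if "b < k" for b
  proof -
    have "(\<Sum>a<k. c a * H a b) = bil m G (\<lambda>i. \<Sum>a<k. c a * e a i) (e b)"
      using gram that by (simp add: bil_sum_left)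
    also have "\<dots> = 0"
      using comb by (simp add: bil_def)
    finally show ?thesis .
  qed
  have "c d = (\<Sum>a<k. if a = d then c a else 0)"
    using \<open>d < k\<close> by simp
  also have "\<dots> = (\<Sum>a<k. c a * (\<Sum>b<k. H a b * N b d))"
    using inverse \<open>d < k\<close> by (intro sum.cong) auto
  also have "\<dots> = (\<Sum>a<k. \<Sum>b<k. c a * H a b * N b d)"
    by (simp add: sum_distrib_left mult.assoc)
  also have "\<dots> = (\<Sum>b<k. (\<Sum>a<k. c a * H a b) * N b d)"
    by (subst sum.swap) (simp add: sum_distrib_right)
  also have "\<dots> = 0"
    using orth by simp
  finally show "c d = 0" .
qed

lemma has_sublattice_iso_if_gram_invertible:
  assumes "\<forall>a<k. \<forall>i. i \<ge> m \<longrightarrow> e a i = 0"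
    and "\<forall>a<k. \<forall>b<k. bil m G (e a) (e b) = H a b"
    and "\<forall>a<k. \<forall>d<k. (\<Sum>b<k. H a b * N b d) = (if a = d then 1 else 0)"
  shows "has_sublattice_iso m G k H"
  unfolding has_sublattice_iso_def
  using assms(1,2) linear_independent_if_gram_invertible[OF assms(2,3)] by blast

definition gram_embedding ::
  "nat \<Rightarrow> (nat \<Rightarrow> nat \<Rightarrow> int) \<Rightarrow> nat \<Rightarrow> (nat \<Rightarrow> nat \<Rightarrow> int) \<Rightarrow> (nat \<Rightarrow> nat) \<Rightarrow> bool" where
  "gram_embedding m G m' G' p \<longleftrightarrow>
     inj_on p {..<m} \<and> p ` {..<m} \<subseteq> {..<m'} \<and> (\<forall>i<m. \<forall>j<m. G' (p i) (p j) = G i j)"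

lemma has_sublattice_iso_gram_embedding:
  assumes emb: "gram_embedding m G m' G' p"
    and sub: "has_sublattice_iso m G k H"
  shows "has_sublattice_iso m' G' k H"
proof -
  obtain e where gram: "\<forall>a<k. \<forall>b<k. bil m G (e a) (e b) = H a b"
    and indep: "\<forall>c :: nat \<Rightarrow> int. (\<forall>i<m. (\<Sum>a<k. c a * e a i) = 0) \<longrightarrow> (\<forall>a<k. c a = 0)"
    using sub unfolding has_sublattice_iso_def by blast
  have inj: "inj_on p {..<m}" and range: "p ` {..<m} \<subseteq> {..<m'}"
    and G': "\<forall>i<m. \<forall>j<m. G' (p i) (p j) = G i j"
    using emb unfolding gram_embedding_def by auto
  define e' where "e' a i = (if i \<in> p ` {..<m} then e a (the_inv_into {..<m} p i) else 0)" for a i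
  have e'_p: "e' a (p i) = e a i" if "i < m" for a i
    using that inj unfolding e'_def by (auto simp: the_inv_into_f_f)
  have sum_range: "(\<Sum>i<m'. f i) = (\<Sum>i\<in>p ` {..<m}. f i)"
    if "\<forall>i. i \<notin> p ` {..<m} \<longrightarrow> f i = 0" for f :: "nat \<Rightarrow> int"
    using range that by (intro sum.mono_neutral_right) auto
  have "bil m' G' (e' a) (e' b) = bil m G (e a) (e b)" for a b
  proof -
    have "bil m' G' (e' a) (e' b) = (\<Sum>i<m'. \<Sum>j\<in>p ` {..<m}. e' a i * G' i j * e' b j)"
      unfolding bil_def by (intro sum.cong refl sum_range) (simp add: e'_def)
    also have "\<dots> = (\<Sum>i\<in>p ` {..<m}. \<Sum>j\<in>p ` {..<m}. e' a i * G' i j * e' b j)"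
      by (rule sum_range) (simp add: e'_def)
    also have "\<dots> = bil m G (e a) (e b)"
      unfolding bil_def using inj G' by (simp add: sum.reindex e'_p)
    finally show ?thesis .
  qed
  with gram have gram': "\<forall>a<k. \<forall>b<k. bil m' G' (e' a) (e' b) = H a b"
    by simp
  have supp': "\<forall>a<k. \<forall>i. i \<ge> m' \<longrightarrow> e' a i = 0"
    using range unfolding e'_def by auto
  have indep': "\<forall>a<k. c a = 0" if comb: "\<forall>i<m'. (\<Sum>a<k. c a * e' a i) = 0" for c
  proof -
    have "(\<Sum>a<k. c a * e a i) = 0" if "i < m" for i
    proof -
      have "p i < m'"
        using range that by auto
      then have "(\<Sum>a<k. c a * e' a (p i)) = 0"
        using comb by blast
      then show ?thesis
        using e'_p[OF that] by simp
    qed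
    then show ?thesis
      using indep by blast
  qed
  show ?thesis
    unfolding has_sublattice_iso_def using supp' gram' indep' by blast
qed

lemma gram_embedding_U_plus:
  assumes "gram_embedding m H m' H' p"
  shows "gram_embedding (m + 2) (U_plus H) (m' + 2) (U_plus H')
           (\<lambda>i. if i < 2 then i else p (i - 2) + 2)" (is "gram_embedding _ _ _ _ ?q")
proof -
  have inj: "inj_on p {..<m}" and range: "p ` {..<m} \<subseteq> {..<m'}"
    and gram: "\<forall>i<m. \<forall>j<m. H' (p i) (p j) = H i j"
    using assms unfolding gram_embedding_def by auto
  have "inj_on ?q {..<m + 2}"
  proof (rule inj_onI)
    fix i j assume "i \<in> {..<m + 2}" "j \<in> {..<m + 2}" and eq: "?q i = ?q j"
    show "i = j"
    proof (cases "i < 2 \<or> j < 2")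
      case True
      with eq show ?thesis by (auto split: if_splits)
    next
      case False
      with \<open>i \<in> {..<m + 2}\<close> \<open>j \<in> {..<m + 2}\<close> eq
      have "i - 2 < m" "j - 2 < m" "p (i - 2) = p (j - 2)" by auto
      then have "i - 2 = j - 2"
        using inj by (auto dest: inj_onD)
      with False show ?thesis by linarith
    qed
  qed
  moreover have "?q ` {..<m + 2} \<subseteq> {..<m' + 2}"
  proof (rule image_subsetI)
    fix i assume "i \<in> {..<m + 2}"
    then have "i < 2 \<or> i - 2 < m"
      by auto
    with range show "?q i \<in> {..<m' + 2}"
      by auto
  qed
  moreover have "U_plus H' (?q i) (?q j) = U_plus H i j" if "i < m + 2" "j < m + 2" for i j
    using gram that by (auto simp: U_plus_def)
  ultimately show ?thesis
    unfolding gram_embedding_def by blast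
qed

lemma gram_embedding_A:
  assumes "m \<le> n"
  shows "gram_embedding m (ade_gram (A m)) n (ade_gram (A n)) id"
  using assms unfolding gram_embedding_def ade_gram_def by auto

lemma dynkin_adj_D_shift:
  assumes "4 \<le> m" "m \<le> n" "i < m" "j < m"
  shows "dynkin_adj (D n) (i + (n - m)) (j + (n - m)) = dynkin_adj (D m) i j"
proof -
  have "i + (n - m) \<le> n - 2 \<longleftrightarrow> i \<le> m - 2" "j + (n - m) \<le> n - 2 \<longleftrightarrow> j \<le> m - 2"
    "i + (n - m) = n - 1 \<longleftrightarrow> i = m - 1" "j + (n - m) = n - 1 \<longleftrightarrow> j = m - 1"
    "i + (n - m) = n - 3 \<longleftrightarrow> i = m - 3" "j + (n - m) = n - 3 \<longleftrightarrow> j = m - 3"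
    "i + (n - m) = j + (n - m) + 1 \<longleftrightarrow> i = j + 1" "j + (n - m) = i + (n - m) + 1 \<longleftrightarrow> j = i + 1"
    using assms by arith+
  then show ?thesis by (simp only: dynkin_adj.simps)
qed

lemma gram_embedding_D:
  assumes "4 \<le> m" "m \<le> n"
  shows "gram_embedding m (ade_gram (D m)) n (ade_gram (D n)) (\<lambda>i. i + (n - m))"
  unfolding gram_embedding_def
proof (intro conjI allI impI)
  show "inj_on (\<lambda>i. i + (n - m)) {..<m}"
    by (simp add: inj_on_def)
  show "(\<lambda>i. i + (n - m)) ` {..<m} \<subseteq> {..<n}"
    using assms by auto
  fix i j assume "i < m" "j < m"
  then show "ade_gram (D n) (i + (n - m)) (j + (n - m)) = ade_gram (D m) i j"
    using dynkin_adj_D_shift[OF assms \<open>i < m\<close> \<open>j < m\<close>] by (simp add: ade_gram_def)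
qed

text \<open>U is its own inverse; the E_8 block is minus the inverse Cartan matrix of E_8.\<close>

definition U_E8_gram_inverse :: "nat \<Rightarrow> nat \<Rightarrow> int" where
  "U_E8_gram_inverse b d =
    [[0, 1, 0, 0, 0, 0, 0, 0, 0, 0], [1, 0, 0, 0, 0, 0, 0, 0, 0, 0],
     [0, 0, -4, -7, -10, -8, -6, -4, -2, -5], [0, 0, -7, -14, -20, -16, -12, -8, -4, -10],
     [0, 0, -10, -20, -30, -24, -18, -12, -6, -15], [0, 0, -8, -16, -24, -20, -15, -10, -5, -12],
     [0, 0, -6, -12, -18, -15, -12, -8, -4, -9], [0, 0, -4, -8, -12, -10, -8, -6, -3, -6],
     [0, 0, -2, -4, -6, -5, -4, -3, -2, -3], [0, 0, -5, -10, -15, -12, -9, -6, -3, -8]] ! b ! d"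

lemma U_E8_gram_inverse:
  "\<forall>a<10. \<forall>d<10.
     (\<Sum>b<10. U_plus (ade_gram (E 8)) a b * U_E8_gram_inverse b d) = (if a = d then 1 else 0)"
proof -
  have "\<forall>a\<in>{..<10}. \<forall>d\<in>{..<10}.
      (\<Sum>b<10. U_plus (ade_gram (E 8)) a b * U_E8_gram_inverse b d) = (if a = d then 1 else 0)"
    \<comment> \<open>expand the quantifiers first: evaluating under them would case-split on the free indices\<close>
    unfolding lessThan_nat_numeral
    by (simp del: lessThan_nat_numeral)
      (unfold U_E8_gram_inverse_def U_plus_def ade_gram_def, code_simp)
  then show ?thesis
    by (simp only: Ball_def lessThan_iff)
qed

text \<open>Rows 2 to 8 are the simple roots r_0, ..., r_6, which form the path 0-1-...-6 of the
  E_8 diagram; row 9 is a root meeting only r_2 among them, and rows 0, 1 are a hyperbolic pair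
  orthogonal to the other eight rows.\<close>

definition U_E8_in_U_A9 :: "nat \<Rightarrow> nat \<Rightarrow> int" where
  "U_E8_in_U_A9 a i = (if i < 11 then
    [[-3, -8, 1, 2, 3, 4, 5, 6, 7, 8, 2], [-3, -7, 1, 2, 3, 4, 5, 6, 7, 8, 3],
     [0, 0, 1, 0, 0, 0, 0, 0, 0, 0, 0], [0, 0, 0, 1, 0, 0, 0, 0, 0, 0, 0],
     [0, 0, 0, 0, 1, 0, 0, 0, 0, 0, 0], [0, 0, 0, 0, 0, 1, 0, 0, 0, 0, 0],
     [0, 0, 0, 0, 0, 0, 1, 0, 0, 0, 0], [0, 0, 0, 0, 0, 0, 0, 1, 0, 0, 0],
     [0, 0, 0, 0, 0, 0, 0, 0, 1, 0, 0], [1, 3, -1, -2, -3, -3, -3, -3, -3, -3, -1]] ! a ! i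
    else 0)"

definition U_E8_in_U_D9 :: "nat \<Rightarrow> nat \<Rightarrow> int" where
  "U_E8_in_U_D9 a i = (if i < 11 then
    [[-2, -3, 1, 2, 3, 4, 5, 6, 7, 5, 3], [-3, -2, 1, 2, 3, 4, 5, 6, 7, 5, 3],
     [0, 0, 1, 0, 0, 0, 0, 0, 0, 0, 0], [0, 0, 0, 1, 0, 0, 0, 0, 0, 0, 0],
     [0, 0, 0, 0, 1, 0, 0, 0, 0, 0, 0], [0, 0, 0, 0, 0, 1, 0, 0, 0, 0, 0],
     [0, 0, 0, 0, 0, 0, 1, 0, 0, 0, 0], [0, 0, 0, 0, 0, 0, 0, 1, 0, 0, 0],
     [0, 0, 0, 0, 0, 0, 0, 0, 1, 0, 0], [1, 1, -1, -2, -3, -3, -3, -3, -3, -2, -1]] ! a ! i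
    else 0)"

lemma has_sublattice_iso_U_A9_U_E8:
  "has_sublattice_iso 11 (U_plus (ade_gram (A 9))) 10 (U_plus (ade_gram (E 8)))"
proof (rule has_sublattice_iso_if_gram_invertible[OF _ _ U_E8_gram_inverse])
  show "\<forall>a<10. \<forall>i. i \<ge> 11 \<longrightarrow> U_E8_in_U_A9 a i = 0"
    by (simp add: U_E8_in_U_A9_def)
  have "\<forall>a\<in>{..<10}. \<forall>b\<in>{..<10}. bil 11 (U_plus (ade_gram (A 9)))
      (U_E8_in_U_A9 a) (U_E8_in_U_A9 b) = U_plus (ade_gram (E 8)) a b"
    unfolding bil_def U_E8_in_U_A9_def U_plus_def ade_gram_def by code_simp
  then show "\<forall>a<10. \<forall>b<10. bil 11 (U_plus (ade_gram (A 9)))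
      (U_E8_in_U_A9 a) (U_E8_in_U_A9 b) = U_plus (ade_gram (E 8)) a b"
    by (simp only: Ball_def lessThan_iff)
qed

lemma has_sublattice_iso_U_D9_U_E8:
  "has_sublattice_iso 11 (U_plus (ade_gram (D 9))) 10 (U_plus (ade_gram (E 8)))"
proof (rule has_sublattice_iso_if_gram_invertible[OF _ _ U_E8_gram_inverse])
  show "\<forall>a<10. \<forall>i. i \<ge> 11 \<longrightarrow> U_E8_in_U_D9 a i = 0"
    by (simp add: U_E8_in_U_D9_def)
  have "\<forall>a\<in>{..<10}. \<forall>b\<in>{..<10}. bil 11 (U_plus (ade_gram (D 9)))
      (U_E8_in_U_D9 a) (U_E8_in_U_D9 b) = U_plus (ade_gram (E 8)) a b"
    unfolding bil_def U_E8_in_U_D9_def U_plus_def ade_gram_def by code_simp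
  then show "\<forall>a<10. \<forall>b<10. bil 11 (U_plus (ade_gram (D 9)))
      (U_E8_in_U_D9 a) (U_E8_in_U_D9 b) = U_plus (ade_gram (E 8)) a b"
    by (simp only: Ball_def lessThan_iff)
qed

theorem proposition2p1:
  fixes R :: ade_type
  assumes "ade_valid R" and "ade_rank R \<ge> 9"
  shows "has_sublattice_iso (ade_rank R + 2) (U_plus (ade_gram R)) 10 (U_plus (ade_gram (E 8)))"
proof (cases R)
  case (A n)
  with assms have "9 \<le> n"
    by simp
  from gram_embedding_U_plus[OF gram_embedding_A[OF this]] has_sublattice_iso_U_A9_U_E8
  show ?thesis
    unfolding A by (auto intro: has_sublattice_iso_gram_embedding)
next
  case (D n)
  with assms have "9 \<le> n"
    by simp
  from gram_embedding_U_plus[OF gram_embedding_D[OF _ this]] has_sublattice_iso_U_D9_U_E8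
  show ?thesis
    unfolding D by (auto intro: has_sublattice_iso_gram_embedding)
next
  case (E n)
  with assms show ?thesis
    by (simp add: ade_valid_def)
qed

end
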